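(* Let $H$ be a component of $G[\overline{C}]$ and let $v\in N_H(x_1)$. Then $H$ contains exactly one path $P$ such that $P$ is a $v,w$-path for some $w\in N_H(x_2)$. The same statement holds with the roles of $x_1$ and $x_2$ interchanged.
   Context: All graphs are simple. $\mathcal{G}^*$ denotes the class of graphs in which any two distinct odd cycles share at most one edge. Standing setting: $G\in\mathcal{G}^*$ is $2$-connected, and $C$ is a longest odd cycle of $G$ with $|C|\ge 5$. We also write $C$ for its vertex set. Let $\overline{C}=V(G)\setminus C$, assumed nonempty. For $v\in\overline{C}$ and $w\in C$, $v$ touches $w$ if there is a $v,w$-path meeting $C$ only at $w$. $T(v)=\{w\in C: v \text{ touches } w\}$. In this setting, $T(v)$ is the same set for all $v\in\overline{C}$; this set is $\{x_1,x_2\}$ for two adjacent vertices $x_1,x_2$ of $C$. For $u\in V(G)$, write $N_H(u)=N(u)\cap V(H)$. *)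

theory Defs
  imports Main
begin

definition sgraph :: "'a set \<Rightarrow> ('a \<Rightarrow> 'a \<Rightarrow> bool) \<Rightarrow> bool" where
  "sgraph V E \<longleftrightarrow> finite V \<and> (\<forall>u v. E u v \<longrightarrow> u \<in> V \<and> v \<in> V \<and> u \<noteq> v \<and> E v u)"

definition is_path :: "('a \<Rightarrow> 'a \<Rightarrow> bool) \<Rightarrow> 'a set \<Rightarrow> 'a list \<Rightarrow> bool" where
  "is_path E S P \<longleftrightarrow> P \<noteq> [] \<and> distinct P \<and> set P \<subseteq> S \<and>
     (\<forall>i. Suc i < length P \<longrightarrow> E (P ! i) (P ! Suc i))"

definition is_cycle :: "'a set \<Rightarrow> ('a \<Rightarrow> 'a \<Rightarrow> bool) \<Rightarrow> 'a list \<Rightarrow> bool" where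
  "is_cycle V E C \<longleftrightarrow> 3 \<le> length C \<and> is_path E V C \<and> E (last C) (hd C)"

definition cyc_edges :: "'a list \<Rightarrow> 'a set set" where
  "cyc_edges C = {{C ! i, C ! ((i + 1) mod length C)} | i. i < length C}"

definition odd_cycle :: "'a set \<Rightarrow> ('a \<Rightarrow> 'a \<Rightarrow> bool) \<Rightarrow> 'a list \<Rightarrow> bool" where
  "odd_cycle V E C \<longleftrightarrow> is_cycle V E C \<and> odd (length C)"

text \<open>Class G*: any two distinct odd cycles (as subgraphs, i.e. edge sets) share at most one edge.\<close>
definition in_Gstar :: "'a set \<Rightarrow> ('a \<Rightarrow> 'a \<Rightarrow> bool) \<Rightarrow> bool" where
  "in_Gstar V E \<longleftrightarrow> (\<forall>C D. odd_cycle V E C \<longrightarrow> odd_cycle V E D \<longrightarrow>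
      cyc_edges C \<noteq> cyc_edges D \<longrightarrow> card (cyc_edges C \<inter> cyc_edges D) \<le> 1)"

definition conn_on :: "('a \<Rightarrow> 'a \<Rightarrow> bool) \<Rightarrow> 'a set \<Rightarrow> bool" where
  "conn_on E S \<longleftrightarrow> (\<forall>u\<in>S. \<forall>v\<in>S. \<exists>P. is_path E S P \<and> hd P = u \<and> last P = v)"

definition two_connected :: "'a set \<Rightarrow> ('a \<Rightarrow> 'a \<Rightarrow> bool) \<Rightarrow> bool" where
  "two_connected V E \<longleftrightarrow> 3 \<le> card V \<and> conn_on E V \<and> (\<forall>x\<in>V. conn_on E (V - {x}))"

definition longest_odd_cycle :: "'a set \<Rightarrow> ('a \<Rightarrow> 'a \<Rightarrow> bool) \<Rightarrow> 'a list \<Rightarrow> bool" where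
  "longest_odd_cycle V E C \<longleftrightarrow> odd_cycle V E C \<and> (\<forall>D. odd_cycle V E D \<longrightarrow> length D \<le> length C)"

definition touches :: "'a set \<Rightarrow> ('a \<Rightarrow> 'a \<Rightarrow> bool) \<Rightarrow> 'a set \<Rightarrow> 'a \<Rightarrow> 'a \<Rightarrow> bool" where
  "touches V E Cs v w \<longleftrightarrow> w \<in> Cs \<and>
     (\<exists>P. is_path E V P \<and> hd P = v \<and> last P = w \<and> set P \<inter> Cs = {w})"

definition touch_set :: "'a set \<Rightarrow> ('a \<Rightarrow> 'a \<Rightarrow> bool) \<Rightarrow> 'a set \<Rightarrow> 'a \<Rightarrow> 'a set" where
  "touch_set V E Cs v = {w. touches V E Cs v w}"

text \<open>H is (the vertex set of) a connected component of the induced subgraph G[S].\<close>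
definition component :: "('a \<Rightarrow> 'a \<Rightarrow> bool) \<Rightarrow> 'a set \<Rightarrow> 'a set \<Rightarrow> bool" where
  "component E S H \<longleftrightarrow> H \<noteq> {} \<and> H \<subseteq> S \<and> conn_on E H \<and>
     (\<forall>u\<in>H. \<forall>x\<in>S. E u x \<longrightarrow> x \<in> H)"

definition nbr_in :: "('a \<Rightarrow> 'a \<Rightarrow> bool) \<Rightarrow> 'a set \<Rightarrow> 'a \<Rightarrow> 'a set" where
  "nbr_in E H u = {x \<in> H. E u x}"

end

theory Submission
  imports Defs
begin

text \<open>Call a path P in H an ear if its ends are adjacent to x1 and x2. Splitting C at x1 and x2
  gives two arcs whose lengths add up to |C| + 2, so if P had even length, P together with one of
  the arcs would be an odd cycle; that arc would have at least three vertices (else P would be odd),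
  so this cycle shares two edges with C, which G* forbids. Hence every ear closes, through the edge
  x1x2, an odd cycle. Two ears starting at the same vertex give odd cycles sharing the edges
  x2x1 and x1v, so by G* they have the same edge set and the ears coincide. Existence of an ear
  is the fact that v touches x2.\<close>

lemma is_path_iff_successively:
  "is_path E S P \<longleftrightarrow> P \<noteq> [] \<and> distinct P \<and> set P \<subseteq> S \<and> successively E P"
  unfolding is_path_def successively_conv_nth by simp

lemma sgraph_sym: "sgraph V E \<Longrightarrow> E u w \<Longrightarrow> E w u"
  unfolding sgraph_def by blast

lemma cyc_edges_Suc: "Suc k < length L \<Longrightarrow> {L ! k, L ! Suc k} \<in> cyc_edges L"
  unfolding cyc_edges_def by (rule CollectI, rule exI[of _ k]) simp

lemma cyc_edges_last_hd: "L \<noteq> [] \<Longrightarrow> {last L, hd L} \<in> cyc_edges L"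
  unfolding cyc_edges_def
  by (rule CollectI, rule exI[of _ "length L - 1"]) (simp add: last_conv_nth hd_conv_nth)

lemma cyc_edges_subset: "e \<in> cyc_edges L \<Longrightarrow> e \<subseteq> set L"
  unfolding cyc_edges_def by (auto intro!: nth_mem mod_less_divisor)

lemma finite_cyc_edges: "finite (cyc_edges L)"
proof -
  have "cyc_edges L = (\<lambda>i. {L ! i, L ! ((i + 1) mod length L)}) ` {..<length L}"
    unfolding cyc_edges_def by auto
  thus ?thesis by simp
qed

lemma cyc_edges_adjacent:
  assumes "sgraph V E" and "is_cycle V E L" and "{u, w} \<in> cyc_edges L"
  shows "E u w"
proof -
  obtain i where i: "i < length L" "{u, w} = {L ! i, L ! ((i + 1) mod length L)}"
    using assms(3) unfolding cyc_edges_def by auto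
  have "E (L ! i) (L ! ((i + 1) mod length L))"
  proof (cases "Suc i < length L")
    case True
    thus ?thesis using assms(2) unfolding is_cycle_def is_path_def by auto
  next
    case False
    hence "Suc i = length L" using i(1) by simp
    hence "i = length L - 1" "(i + 1) mod length L = 0" by auto
    thus ?thesis using assms(2) i(1) unfolding is_cycle_def
      by (metis hd_conv_nth last_conv_nth list.size(3) not_less0)
  qed
  thus ?thesis using i(2) sgraph_sym[OF assms(1)] unfolding doubleton_eq_iff by auto
qed

lemma cyc_edges_neighbour:
  assumes "distinct L" and "2 \<le> length L" and "k < length L" and "{L ! k, y} \<in> cyc_edges L"
  shows "y = L ! ((k + 1) mod length L) \<or> (0 < k \<and> y = L ! (k - 1))
    \<or> (k = 0 \<and> y = L ! (length L - 1))"
proof -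
  obtain i where i: "i < length L" "{L ! k, y} = {L ! i, L ! ((i + 1) mod length L)}"
    using assms(4) unfolding cyc_edges_def by auto
  have succ_less: "(i + 1) mod length L < length L" using assms(2) by (cases L) auto
  from i(2) consider "L ! k = L ! i" "y = L ! ((i + 1) mod length L)"
    | "L ! k = L ! ((i + 1) mod length L)" "y = L ! i"
    unfolding doubleton_eq_iff by blast
  thus ?thesis
  proof cases
    case 1
    hence "k = i" using assms(1,3) i(1) nth_eq_iff_index_eq by metis
    thus ?thesis using 1 by simp
  next
    case 2
    hence k: "k = (i + 1) mod length L" using assms(1,3) succ_less nth_eq_iff_index_eq by metis
    show ?thesis
    proof (cases "Suc i < length L")
      case True
      thus ?thesis using k 2 by auto
    next
      case False
      hence "Suc i = length L" using i(1) by simp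
      hence "k = 0" "i = length L - 1" using k by auto
      thus ?thesis using 2 by auto
    qed
  qed
qed

definition cycle_arc :: "'a list \<Rightarrow> 'a list \<Rightarrow> bool" where
  "cycle_arc C A \<longleftrightarrow> distinct A \<and> set A \<subseteq> set C \<and> successively (\<lambda>u w. {u, w} \<in> cyc_edges C) A"

lemma cycle_arc_rev: "cycle_arc C A \<Longrightarrow> cycle_arc C (rev A)"
  unfolding cycle_arc_def by (simp add: insert_commute)

lemma cycle_arc_is_path:
  assumes "sgraph V E" and "is_cycle V E C" and "cycle_arc C A" and "A \<noteq> []"
  shows "is_path E (set C) A"
  using assms(3,4) cyc_edges_adjacent[OF assms(1,2)]
  unfolding is_path_iff_successively cycle_arc_def by (auto elim: successively_mono)

lemma successively_cyc_edges_drop: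
  "successively (\<lambda>u w. {u, w} \<in> cyc_edges C) (drop b C)"
  unfolding successively_conv_nth using cyc_edges_Suc[of "b + _" C] by simp

lemma successively_cyc_edges_take:
  "successively (\<lambda>u w. {u, w} \<in> cyc_edges C) (take a C)"
  unfolding successively_conv_nth using cyc_edges_Suc[of _ C] by simp

lemma cycle_arcs_ordered:
  assumes "distinct C" and "a < b" and "b < length C"
  shows "\<exists>A1 A2. cycle_arc C A1 \<and> cycle_arc C A2 \<and> hd A1 = C ! a \<and> last A1 = C ! b
    \<and> hd A2 = C ! b \<and> last A2 = C ! a \<and> length A1 + length A2 = length C + 2
    \<and> 2 \<le> length A1 \<and> 2 \<le> length A2"
proof -
  define A1 where "A1 = take (b - a + 1) (drop a C)"
  define A2 where "A2 = drop b C @ take (a + 1) C"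
  have len1: "length A1 = b - a + 1" and len2: "length A2 = length C - b + a + 1"
    unfolding A1_def A2_def using assms by auto
  have nth1: "k < length A1 \<Longrightarrow> A1 ! k = C ! (a + k)" for k
    unfolding A1_def using assms len1 by auto
  have "successively (\<lambda>u w. {u, w} \<in> cyc_edges C) A1"
    unfolding successively_conv_nth using nth1 len1 assms cyc_edges_Suc[of "a + _" C] by simp
  hence arc1: "cycle_arc C A1" unfolding cycle_arc_def A1_def
    using assms set_drop_subset[of a C] set_take_subset[of "b - a + 1" "drop a C"] by auto
  have C_ne: "C \<noteq> []" using assms by auto
  have "distinct A2" unfolding A2_def
    using assms set_take_disj_set_drop_if_distinct[of C "a + 1" b] by (simp add: disjoint_iff) blast
  moreover have "successively (\<lambda>u w. {u, w} \<in> cyc_edges C) A2"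
    unfolding A2_def successively_append_iff
    using successively_cyc_edges_drop[of C b] successively_cyc_edges_take[of C "a + 1"]
      cyc_edges_last_hd[OF C_ne] assms C_ne by simp
  ultimately have arc2: "cycle_arc C A2" unfolding cycle_arc_def A2_def
    using set_drop_subset[of b C] set_take_subset[of "a + 1" C] by auto
  have "hd A1 = C ! a" using nth1[of 0] len1 by (subst hd_conv_nth) auto
  moreover have "last A1 = C ! b" using nth1[of "b - a"] len1 assms by (subst last_conv_nth) auto
  moreover have "hd A2 = C ! b" unfolding A2_def using assms by (simp add: hd_drop_conv_nth)
  moreover have "last A2 = C ! a" unfolding A2_def using assms by (simp add: take_Suc_conv_app_nth)
  ultimately show ?thesis using arc1 arc2 len1 len2 assms by (intro exI[of _ A1] exI[of _ A2]) auto
qed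

lemma cycle_arcs:
  assumes "distinct C" and "i \<noteq> j" and "i < length C" and "j < length C"
  shows "\<exists>A1 A2. cycle_arc C A1 \<and> cycle_arc C A2 \<and> hd A1 = C ! i \<and> last A1 = C ! j
    \<and> hd A2 = C ! i \<and> last A2 = C ! j \<and> length A1 + length A2 = length C + 2
    \<and> 2 \<le> length A1 \<and> 2 \<le> length A2"
proof (cases "i < j")
  case True
  then obtain A1 A2 where "cycle_arc C A1 \<and> cycle_arc C A2 \<and> hd A1 = C ! i \<and> last A1 = C ! j
    \<and> hd A2 = C ! j \<and> last A2 = C ! i \<and> length A1 + length A2 = length C + 2
    \<and> 2 \<le> length A1 \<and> 2 \<le> length A2"
    using cycle_arcs_ordered[OF assms(1) True assms(4)] by blast
  thus ?thesis by (intro exI[of _ A1] exI[of _ "rev A2"]) (auto simp: cycle_arc_rev hd_rev last_rev)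
next
  case False
  hence "j < i" using assms(2) by simp
  then obtain A1 A2 where "cycle_arc C A1 \<and> cycle_arc C A2 \<and> hd A1 = C ! j \<and> last A1 = C ! i
    \<and> hd A2 = C ! i \<and> last A2 = C ! j \<and> length A1 + length A2 = length C + 2
    \<and> 2 \<le> length A1 \<and> 2 \<le> length A2"
    using cycle_arcs_ordered[OF assms(1) _ assms(3)] by blast
  thus ?thesis by (intro exI[of _ "rev A1"] exI[of _ A2]) (auto simp: cycle_arc_rev hd_rev last_rev)
qed

lemma is_cycle_append:
  assumes "is_path E U P" and "U \<inter> set C = {}" and "U \<subseteq> V" and "set C \<subseteq> V"
    and "is_path E (set C) A" and "2 \<le> length A"
    and "E (last P) (hd A)" and "E (last A) (hd P)"
  shows "is_cycle V E (P @ A)"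
proof -
  have "P \<noteq> []" "A \<noteq> []" using assms(1,5) unfolding is_path_def by auto
  hence "3 \<le> length P + length A" using assms(6) by (cases P) auto
  thus ?thesis using assms
    unfolding is_cycle_def is_path_iff_successively successively_append_iff by auto
qed

text \<open>P @ A differs from C but shares with it the first two edges of A.\<close>

lemma in_Gstar_no_odd_cycle_along_arc:
  assumes "in_Gstar V E" and "odd_cycle V E C" and "cycle_arc C A" and "3 \<le> length A"
    and "P \<noteq> []" and "set P \<inter> set C = {}"
  shows "\<not> odd_cycle V E (P @ A)"
proof
  assume odd_PA: "odd_cycle V E (P @ A)"
  let ?e1 = "{A ! 0, A ! 1}" and ?e2 = "{A ! 1, A ! 2}"
  have dA: "distinct A" and sA: "successively (\<lambda>u w. {u, w} \<in> cyc_edges C) A"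
    using assms(3) unfolding cycle_arc_def by auto
  have "?e1 \<in> cyc_edges C" "?e2 \<in> cyc_edges C"
    using successively_nth[OF sA, of 0] successively_nth[OF sA, of 1] assms(4)
    by (simp_all add: numeral_2_eq_2)
  moreover have "?e1 \<in> cyc_edges (P @ A)" "?e2 \<in> cyc_edges (P @ A)"
    using cyc_edges_Suc[of "length P" "P @ A"] cyc_edges_Suc[of "length P + 1" "P @ A"] assms(4)
    by (simp_all add: nth_append numeral_2_eq_2)
  ultimately have common: "{?e1, ?e2} \<subseteq> cyc_edges (P @ A) \<inter> cyc_edges C" by auto
  have "0 < length A" "1 < length A" "2 < length A" using assms(4) by auto
  hence "A ! 0 \<noteq> A ! 1" "A ! 0 \<noteq> A ! 2"
    by (simp_all only: nth_eq_iff_index_eq[OF dA])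
  hence "card {?e1, ?e2} = 2" by (simp add: doubleton_eq_iff)
  moreover have "card {?e1, ?e2} \<le> card (cyc_edges (P @ A) \<inter> cyc_edges C)"
    using card_mono[OF finite_Int[OF disjI1[OF finite_cyc_edges]] common] .
  ultimately have "2 \<le> card (cyc_edges (P @ A) \<inter> cyc_edges C)" by simp
  moreover have "cyc_edges (P @ A) \<noteq> cyc_edges C"
  proof
    assume "cyc_edges (P @ A) = cyc_edges C"
    hence "{last (P @ A), hd (P @ A)} \<subseteq> set C"
      using cyc_edges_last_hd[of "P @ A"] cyc_edges_subset[of _ C] assms(5) by auto
    thus False using assms(5,6) by (cases P) auto
  qed
  hence "card (cyc_edges (P @ A) \<inter> cyc_edges C) \<le> 1"
    using assms(1,2) odd_PA unfolding in_Gstar_def by blast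
  ultimately show False by simp
qed

lemma ear_length_odd:
  assumes sg: "sgraph V E" and gstar: "in_Gstar V E" and odd_C: "odd_cycle V E C"
    and x: "x1 \<in> set C" "x2 \<in> set C" "x1 \<noteq> x2"
    and H: "H \<inter> set C = {}" "H \<subseteq> V"
    and P: "is_path E H P" "E x1 (hd P)" "E x2 (last P)"
  shows "odd (length P)"
proof (rule ccontr)
  assume even_P: "\<not> odd (length P)"
  have cyc: "is_cycle V E C" using odd_C unfolding odd_cycle_def by simp
  hence dC: "distinct C" and CV: "set C \<subseteq> V" unfolding is_cycle_def is_path_def by auto
  obtain i j where ij: "i < length C" "C ! i = x2" "j < length C" "C ! j = x1"
    using x(1,2) by (meson in_set_conv_nth)
  then obtain A1 A2 where A: "cycle_arc C A1" "cycle_arc C A2" "hd A1 = x2" "last A1 = x1"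
    "hd A2 = x2" "last A2 = x1" "length A1 + length A2 = length C + 2"
    "2 \<le> length A1" "2 \<le> length A2"
    using cycle_arcs[OF dC, of i j] x(3) by metis
  have "P \<noteq> []" and P_C: "set P \<inter> set C = {}" using P(1) H(1) unfolding is_path_def by auto
  have short_arc: "length A = 2"
    if "cycle_arc C A" "hd A = x2" "last A = x1" "2 \<le> length A" "odd (length P + length A)" for A
  proof (rule ccontr)
    assume "length A \<noteq> 2"
    have "A \<noteq> []" using that(4) by auto
    hence "is_path E (set C) A" using cycle_arc_is_path[OF sg cyc that(1)] by simp
    hence "odd_cycle V E (P @ A)"
      using is_cycle_append[OF P(1) H CV] that P sgraph_sym[OF sg] unfolding odd_cycle_def by auto
    thus False using in_Gstar_no_odd_cycle_along_arc[OF gstar odd_C that(1) _ \<open>P \<noteq> []\<close> P_C]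
      \<open>length A \<noteq> 2\<close> that(4) by simp
  qed
  have "odd (length C)" using odd_C unfolding odd_cycle_def by simp
  hence "odd (length P + length A1) \<or> odd (length P + length A2)" using A(7) even_P by presburger
  thus False using short_arc A even_P by fastforce
qed

lemma ear_odd_cycle:
  assumes sg: "sgraph V E" and gstar: "in_Gstar V E" and odd_C: "odd_cycle V E C"
    and x: "x1 \<in> set C" "x2 \<in> set C" "E x1 x2"
    and H: "H \<inter> set C = {}" "H \<subseteq> V"
    and P: "is_path E H P" "E x1 (hd P)" "E x2 (last P)"
  shows "odd_cycle V E (P @ [x2, x1])"
proof -
  have CV: "set C \<subseteq> V" using odd_C unfolding odd_cycle_def is_cycle_def is_path_def by auto
  have "x1 \<noteq> x2" using x(3) sg unfolding sgraph_def by blast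
  hence "is_path E (set C) [x2, x1]"
    using x sgraph_sym[OF sg x(3)] unfolding is_path_def by (auto simp: less_Suc_eq)
  hence "is_cycle V E (P @ [x2, x1])"
    using is_cycle_append[OF P(1) H CV] P sgraph_sym[OF sg] by auto
  thus ?thesis using ear_length_odd[OF sg gstar odd_C x(1,2) \<open>x1 \<noteq> x2\<close> H P]
    unfolding odd_cycle_def by simp
qed

text \<open>Walking along the common edge set: the successor of P ! k on the cycle Q @ [x2, x1] is
  neither x1 nor x2 (they lie outside H) nor Q ! (k - 1) = P ! (k - 1), so it is Q ! Suc k.\<close>

lemma cyc_edges_eq_common_prefix:
  assumes dQ: "distinct (Q @ [x2, x1])"
    and edges: "cyc_edges (P @ [x2, x1]) = cyc_edges (Q @ [x2, x1])"
    and P: "is_path E H P" and Q: "is_path E H Q" and hd: "hd P = hd Q"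
    and xH: "x1 \<notin> H" "x2 \<notin> H"
  shows "k < length P \<Longrightarrow> \<forall>k'\<le>k. k' < length Q \<and> P ! k' = Q ! k'"
proof (induction k)
  case 0
  have "P \<noteq> []" "Q \<noteq> []" using P Q unfolding is_path_def by auto
  thus ?case using hd by (simp add: hd_conv_nth)
next
  case (Suc k)
  hence IH: "\<forall>k'\<le>k. k' < length Q \<and> P ! k' = Q ! k'" by simp
  have dP: "distinct P" and yH: "P ! Suc k \<in> H" using P Suc.prems unfolding is_path_def by auto
  let ?DQ = "Q @ [x2, x1]"
  have kQ: "k < length Q" and Pk: "P ! k = Q ! k" using IH by auto
  have "{P ! k, P ! Suc k} \<in> cyc_edges ?DQ"
    using cyc_edges_Suc[of k "P @ [x2, x1]"] Suc.prems edges by (simp add: nth_append)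
  hence "{?DQ ! k, P ! Suc k} \<in> cyc_edges ?DQ" using kQ Pk by (simp add: nth_append)
  from cyc_edges_neighbour[OF dQ _ _ this] kQ
  consider "P ! Suc k = ?DQ ! Suc k" | "0 < k" "P ! Suc k = ?DQ ! (k - 1)"
    | "k = 0" "P ! Suc k = x1"
    by (auto simp: nth_append)
  hence "Suc k < length Q \<and> P ! Suc k = Q ! Suc k"
  proof cases
    case 1
    thus ?thesis using yH xH kQ by (cases "Suc k < length Q") (auto simp: nth_append)
  next
    case 2
    have "k - 1 < length Q" "P ! (k - 1) = Q ! (k - 1)" using IH by auto
    hence "P ! Suc k = P ! (k - 1)" using 2 by (simp add: nth_append)
    moreover have "k - 1 < length P" "Suc k \<noteq> k - 1" using Suc.prems by auto
    ultimately show ?thesis using nth_eq_iff_index_eq[OF dP] Suc.prems by blast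
  next
    case 3
    thus ?thesis using yH xH by simp
  qed
  thus ?case using IH le_Suc_eq by auto
qed

lemma ear_unique:
  assumes sg: "sgraph V E" and gstar: "in_Gstar V E" and odd_C: "odd_cycle V E C"
    and x: "x1 \<in> set C" "x2 \<in> set C" "E x1 x2"
    and H: "H \<inter> set C = {}" "H \<subseteq> V"
    and P: "is_path E H P" "E x1 (hd P)" "E x2 (last P)"
    and Q: "is_path E H Q" "E x1 (hd Q)" "E x2 (last Q)"
    and hd: "hd P = hd Q"
  shows "P = Q"
proof -
  let ?DP = "P @ [x2, x1]" and ?DQ = "Q @ [x2, x1]"
  have odd_DP: "odd_cycle V E ?DP" using ear_odd_cycle[OF sg gstar odd_C x H P] .
  have odd_DQ: "odd_cycle V E ?DQ" using ear_odd_cycle[OF sg gstar odd_C x H Q] .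
  have "P \<noteq> []" "Q \<noteq> []" and "hd P \<in> H" using P(1) Q(1) unfolding is_path_def by auto
  have xH: "x1 \<notin> H" "x2 \<notin> H" using x H by auto
  have "{{x2, x1}, {x1, hd P}} \<subseteq> cyc_edges ?DP \<inter> cyc_edges ?DQ"
    using cyc_edges_Suc[of "length P" ?DP] cyc_edges_Suc[of "length Q" ?DQ]
      cyc_edges_last_hd[of ?DP] cyc_edges_last_hd[of ?DQ] \<open>P \<noteq> []\<close> \<open>Q \<noteq> []\<close> hd
    by (auto simp: nth_append)
  moreover have "{x2, x1} \<noteq> {x1, hd P}" using \<open>hd P \<in> H\<close> xH by (auto simp: doubleton_eq_iff)
  hence "card {{x2, x1}, {x1, hd P}} = 2" by simp
  ultimately have "2 \<le> card (cyc_edges ?DP \<inter> cyc_edges ?DQ)"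
    by (metis card_mono finite_Int finite_cyc_edges)
  hence edges: "cyc_edges ?DP = cyc_edges ?DQ"
    using gstar odd_DP odd_DQ unfolding in_Gstar_def by force
  have "distinct ?DP" "distinct ?DQ"
    using odd_DP odd_DQ unfolding odd_cycle_def is_cycle_def is_path_def by auto
  have PQ: "\<forall>k\<le>length P - 1. k < length Q \<and> P ! k = Q ! k"
    using cyc_edges_eq_common_prefix[OF \<open>distinct ?DQ\<close> edges P(1) Q(1) hd xH, of "length P - 1"] \<open>P \<noteq> []\<close> by simp
  have QP: "\<forall>k\<le>length Q - 1. k < length P \<and> Q ! k = P ! k"
    using cyc_edges_eq_common_prefix[OF \<open>distinct ?DP\<close> edges[symmetric] Q(1) P(1) hd[symmetric] xH,
        of "length Q - 1"] \<open>Q \<noteq> []\<close> by simp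
  have "length P = length Q"
    using PQ[rule_format, of "length P - 1"] QP[rule_format, of "length Q - 1"] \<open>P \<noteq> []\<close> \<open>Q \<noteq> []\<close>
    by (cases P; cases Q) auto
  thus ?thesis using PQ by (auto intro: nth_equalityI)
qed

lemma touches_ear:
  assumes H: "component E (V - set C) H" and "v \<in> H" and "touches V E (set C) v x2"
  shows "\<exists>P. is_path E H P \<and> hd P = v \<and> E (last P) x2"
proof -
  obtain T where T: "is_path E V T" "hd T = v" "last T = x2" "set T \<inter> set C = {x2}"
    using assms(3) unfolding touches_def by blast
  have H_sub: "H \<subseteq> V - set C" and H_closed: "\<forall>u\<in>H. \<forall>x\<in>V - set C. E u x \<longrightarrow> x \<in> H"
    using H unfolding component_def by auto
  have "T \<noteq> []" and dT: "distinct T" and sT: "successively E T" and TV: "set T \<subseteq> V"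
    using T(1) unfolding is_path_iff_successively by auto
  define P where "P = butlast T"
  have TP: "T = P @ [x2]" unfolding P_def using append_butlast_last_id[OF \<open>T \<noteq> []\<close>] T(3) by simp
  have "v \<noteq> x2" using \<open>v \<in> H\<close> H_sub T(4) by blast
  hence "P \<noteq> []" using TP T(2) by auto
  have "distinct P" "x2 \<notin> set P" using dT TP by auto
  hence P_out: "set P \<subseteq> V - set C" using T(4) TV TP by auto
  have sP: "successively E P" and last_E: "E (last P) x2"
    using sT \<open>P \<noteq> []\<close> unfolding TP successively_append_iff by auto
  have hd_P: "hd P = v" using T(2) TP \<open>P \<noteq> []\<close> by simp
  have "k < length P \<Longrightarrow> P ! k \<in> H" for k
  proof (induction k)
    case 0
    thus ?case using hd_P \<open>v \<in> H\<close> \<open>P \<noteq> []\<close> by (simp add: hd_conv_nth)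
  next
    case (Suc k)
    thus ?case using H_closed successively_nth[OF sP Suc.prems] P_out nth_mem by fastforce
  qed
  hence "set P \<subseteq> H" by (auto simp: in_set_conv_nth)
  hence "is_path E H P" using \<open>P \<noteq> []\<close> \<open>distinct P\<close> sP unfolding is_path_iff_successively by simp
  thus ?thesis using hd_P last_E by blast
qed

lemma ear_ex1:
  assumes sg: "sgraph V E" and gstar: "in_Gstar V E" and odd_C: "odd_cycle V E C"
    and x: "x1 \<in> set C" "x2 \<in> set C" "E x1 x2"
    and touch: "\<forall>v \<in> V - set C. touch_set V E (set C) v = {x1, x2}"
    and H: "component E (V - set C) H"
    and v: "v \<in> nbr_in E H x1"
  shows "\<exists>!P. is_path E H P \<and> hd P = v \<and> last P \<in> nbr_in E H x2"
proof -
  have H_sub: "H \<subseteq> V - set C" using H unfolding component_def by auto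
  hence H_disj: "H \<inter> set C = {}" "H \<subseteq> V" by auto
  have "v \<in> H" "E x1 v" using v unfolding nbr_in_def by auto
  have "touches V E (set C) v x2" using touch \<open>v \<in> H\<close> H_sub unfolding touch_set_def by blast
  then obtain P where P: "is_path E H P" "hd P = v" "E (last P) x2"
    using touches_ear[OF H \<open>v \<in> H\<close>] by blast
  have "last P \<in> nbr_in E H x2"
    using P sgraph_sym[OF sg] unfolding is_path_def nbr_in_def by auto
  moreover have "Q = P" if "is_path E H Q" "hd Q = v" "last Q \<in> nbr_in E H x2" for Q
    using ear_unique[OF sg gstar odd_C x H_disj, of Q P] that P \<open>last P \<in> nbr_in E H x2\<close> \<open>E x1 v\<close>
    unfolding nbr_in_def by auto
  ultimately show ?thesis using P by blast
qed

theorem mainTheorem8: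
  fixes V :: "'a set" and E :: "'a \<Rightarrow> 'a \<Rightarrow> bool" and C :: "'a list"
    and x1 x2 :: 'a and H :: "'a set"
  assumes "sgraph V E"
    and "in_Gstar V E"
    and "two_connected V E"
    and "longest_odd_cycle V E C"
    and "5 \<le> length C"
    and "V - set C \<noteq> {}"
    and "x1 \<in> set C" and "x2 \<in> set C" and "E x1 x2"
    and "\<forall>v \<in> V - set C. touch_set V E (set C) v = {x1, x2}"
    and "component E (V - set C) H"
  shows "(\<forall>v \<in> nbr_in E H x1. \<exists>!P. is_path E H P \<and> hd P = v \<and> last P \<in> nbr_in E H x2) \<and>
         (\<forall>v \<in> nbr_in E H x2. \<exists>!P. is_path E H P \<and> hd P = v \<and> last P \<in> nbr_in E H x1)"
proof -
  have odd_C: "odd_cycle V E C" using assms(4) unfolding longest_odd_cycle_def by simp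
  have "\<forall>v \<in> V - set C. touch_set V E (set C) v = {x2, x1}"
    using assms(10) by (simp add: insert_commute)
  thus ?thesis
    using ear_ex1[OF assms(1,2) odd_C assms(7,8,9,10,11)]
      ear_ex1[OF assms(1,2) odd_C assms(8,7) sgraph_sym[OF assms(1,9)] _ assms(11)]
    by blast
qed

end
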